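(* Let $F$ be a non-archimedean local field of any characteristic. Then every element of $K=Sp_4(\mathcal{O})$ is a product $k_1k_2k_3\cdots k_{60}$ with $k_{2m-1}\in K_1$ and $k_{2m}\in K_2$ for $1\leq m\leq 30$; that is, $K=(K_1K_2)^{30}$.
   Context: $\mathcal{O}$ is the ring of integers of $F$. $Sp_4$ is defined by $\{g:{}^tgJg=J\}$ with $J$ the $4\times4$ matrix having $J_{14}=J_{23}=1$, $J_{32}=J_{41}=-1$, other entries $0$. With $Q=\begin{pmatrix}0&1\\1&0\end{pmatrix}$, $K_1=\Big\{\begin{pmatrix}A&0\\0&Q\,{}^tA^{-1}Q\end{pmatrix}:A\in GL_2(\mathcal{O})\Big\}$ and $K_2=\Big\{\begin{pmatrix}1&0&0\\0&B&0\\0&0&1\end{pmatrix}:B\in SL_2(\mathcal{O})\Big\}$ (block sizes $1,2,1$), both subgroups of $K$. *)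

theory Defs
  imports "Jordan_Normal_Form.Matrix" "Jordan_Normal_Form.Determinant"
begin

text \<open>A normalized discrete valuation on the field 'a; the value at 0 is irrelevant
  (conceptually +infinity) and is never used.\<close>
definition discrete_valuation :: "('a::field \<Rightarrow> int) \<Rightarrow> bool" where
  "discrete_valuation v \<longleftrightarrow>
     (\<forall>x y. x \<noteq> 0 \<longrightarrow> y \<noteq> 0 \<longrightarrow> v (x * y) = v x + v y) \<and>
     (\<forall>x y. x \<noteq> 0 \<longrightarrow> y \<noteq> 0 \<longrightarrow> x + y \<noteq> 0 \<longrightarrow> min (v x) (v y) \<le> v (x + y)) \<and>
     (\<exists>p. p \<noteq> 0 \<and> v p = 1)"

definition val_ge :: "('a::field \<Rightarrow> int) \<Rightarrow> int \<Rightarrow> 'a \<Rightarrow> bool" where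
  "val_ge v n x \<longleftrightarrow> x = 0 \<or> n \<le> v x"

definition val_ring :: "('a::field \<Rightarrow> int) \<Rightarrow> 'a set" where
  "val_ring v = {x. val_ge v 0 x}"

definition val_ideal :: "('a::field \<Rightarrow> int) \<Rightarrow> 'a set" where
  "val_ideal v = {x. val_ge v 1 x}"

definition val_cauchy :: "('a::field \<Rightarrow> int) \<Rightarrow> (nat \<Rightarrow> 'a) \<Rightarrow> bool" where
  "val_cauchy v s \<longleftrightarrow> (\<forall>N. \<exists>M. \<forall>m\<ge>M. \<forall>n\<ge>M. val_ge v N (s m - s n))"

definition val_converges :: "('a::field \<Rightarrow> int) \<Rightarrow> (nat \<Rightarrow> 'a) \<Rightarrow> 'a \<Rightarrow> bool" where
  "val_converges v s L \<longleftrightarrow> (\<forall>N. \<exists>M. \<forall>n\<ge>M. val_ge v N (s n - L))"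

text \<open>The residue field O/P as the quotient of O by congruence mod P.\<close>
definition residue_rel :: "('a::field \<Rightarrow> int) \<Rightarrow> ('a \<times> 'a) set" where
  "residue_rel v = {(x, y). x \<in> val_ring v \<and> y \<in> val_ring v \<and> x - y \<in> val_ideal v}"

definition nonarch_local_field :: "('a::field \<Rightarrow> int) \<Rightarrow> bool" where
  "nonarch_local_field v \<longleftrightarrow>
     discrete_valuation v \<and>
     (\<forall>s. val_cauchy v s \<longrightarrow> (\<exists>L. val_converges v s L)) \<and>
     finite (val_ring v // residue_rel v)"

definition int_mat :: "('a::field \<Rightarrow> int) \<Rightarrow> nat \<Rightarrow> 'a mat set" where
  "int_mat v n = {A. A \<in> carrier_mat n n \<and> (\<forall>i<n. \<forall>j<n. A $$ (i, j) \<in> val_ring v)}"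

text \<open>J with J14 = J23 = 1, J32 = J41 = -1 (0-based indices below).\<close>
definition Jmat :: "'a::field mat" where
  "Jmat = mat 4 4 (\<lambda>(i, j). if (i, j) = (0, 3) \<or> (i, j) = (1, 2) then 1
                            else if (i, j) = (2, 1) \<or> (i, j) = (3, 0) then -1 else 0)"

definition Qmat :: "'a::field mat" where
  "Qmat = mat 2 2 (\<lambda>(i, j). if i \<noteq> j then 1 else 0)"

definition Sp4_O :: "('a::field \<Rightarrow> int) \<Rightarrow> 'a mat set" where
  "Sp4_O v = {g. g \<in> int_mat v 4 \<and> transpose_mat g * Jmat * g = Jmat}"

definition GL2_O :: "('a::field \<Rightarrow> int) \<Rightarrow> 'a mat set" where
  "GL2_O v = {A. A \<in> int_mat v 2 \<and> (\<exists>B \<in> int_mat v 2. A * B = 1\<^sub>m 2 \<and> B * A = 1\<^sub>m 2)}"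

definition SL2_O :: "('a::field \<Rightarrow> int) \<Rightarrow> 'a mat set" where
  "SL2_O v = {B. B \<in> int_mat v 2 \<and> det B = 1}"

text \<open>K1: block diagonal diag(A, Q (tA)^(-1) Q) with A in GL_2(O); the lower block D is
  characterised by Q D Q being the inverse of tA.\<close>
definition K1 :: "('a::field \<Rightarrow> int) \<Rightarrow> 'a mat set" where
  "K1 v = {four_block_mat A (0\<^sub>m 2 2) (0\<^sub>m 2 2) D | A D.
             A \<in> GL2_O v \<and> D \<in> carrier_mat 2 2 \<and>
             (Qmat * D * Qmat) * transpose_mat A = 1\<^sub>m 2 \<and>
             transpose_mat A * (Qmat * D * Qmat) = 1\<^sub>m 2}"

text \<open>K2: diag(1, B, 1) with B in SL_2(O) (block sizes 1,2,1).\<close>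
definition embed_mid :: "'a::field mat \<Rightarrow> 'a mat" where
  "embed_mid B = mat 4 4 (\<lambda>(i, j).
      if (i = 0 \<and> j = 0) \<or> (i = 3 \<and> j = 3) then 1
      else if 1 \<le> i \<and> i \<le> 2 \<and> 1 \<le> j \<and> j \<le> 2 then B $$ (i - 1, j - 1) else 0)"

definition K2 :: "('a::field \<Rightarrow> int) \<Rightarrow> 'a mat set" where
  "K2 v = embed_mid ` SL2_O v"

end

theory Submission
  imports Defs
begin

text \<open>
  An element g of \<open>Sp\<^sub>4(O)\<close> is row-reduced using only K_1 and K_2. Its first column is primitive,
  since \<open>\<omega>(g e\<^sub>1, g e\<^sub>4) = 1\<close>. An \<open>SL\<^sub>2(O)\<close>-move on the coordinates 2,3 (in K_2) kills the third
  entry, the permutation \<open>w \<in> K\<^sub>1\<close> swapping \<open>e\<^sub>1 \<leftrightarrow> e\<^sub>2\<close> and \<open>e\<^sub>3 \<leftrightarrow> e\<^sub>4\<close> moves this zero to the fourth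
  entry, and K_2 kills the third entry again. Now one of the first two entries is a unit, and a
  \<open>GL\<^sub>2(O)\<close>-move (in K_1) turns the column into \<open>e\<^sub>1\<close>. The symplectic relations then force
  \<open>g = diag(1, B, 1) x(a) u(b) z(c)\<close> with \<open>B \<in> SL\<^sub>2(O)\<close>, where \<open>x(a) \<in> K\<^sub>1\<close>, \<open>u(b)\<close> is a
  K_2-conjugate of \<open>x(-b)\<close> and \<open>z(c)\<close> is a w-conjugate of an element of K_2. Counting factors
  gives \<open>K = (K\<^sub>1K\<^sub>2)\<^sup>n\<close> for every \<open>n \<ge> 12\<close>.
\<close>

section \<open>The valuation ring\<close>

locale valued_field =
  fixes v :: "'a::field \<Rightarrow> int"
  assumes discrete_valuation: "discrete_valuation v"
begin

abbreviation "Ov \<equiv> val_ring v"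
abbreviation "Pv \<equiv> val_ideal v"

lemma val_mult: "x \<noteq> 0 \<Longrightarrow> y \<noteq> 0 \<Longrightarrow> v (x * y) = v x + v y"
  using discrete_valuation unfolding discrete_valuation_def by blast

lemma val_add: "x \<noteq> 0 \<Longrightarrow> y \<noteq> 0 \<Longrightarrow> x + y \<noteq> 0 \<Longrightarrow> min (v x) (v y) \<le> v (x + y)"
  using discrete_valuation unfolding discrete_valuation_def by blast

lemma val_one: "v 1 = 0"
  using val_mult[of 1 1] by simp

lemma val_uminus: "x \<noteq> 0 \<Longrightarrow> v (- x) = v x"
proof -
  have "v (-1) = 0" using val_mult[of "-1" "-1"] val_one by simp
  then show "x \<noteq> 0 \<Longrightarrow> v (- x) = v x" using val_mult[of "-1" x] by simp
qed

lemma val_inverse: "x \<noteq> 0 \<Longrightarrow> v (inverse x) = - v x"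
  using val_mult[of x "inverse x"] val_one by simp

lemma mem_Ov_iff: "x \<in> Ov \<longleftrightarrow> x = 0 \<or> 0 \<le> v x"
  by (simp add: val_ring_def val_ge_def)

lemma mem_Pv_iff: "x \<in> Pv \<longleftrightarrow> x = 0 \<or> 1 \<le> v x"
  by (simp add: val_ideal_def val_ge_def)

lemma Ov_zero [simp]: "0 \<in> Ov"
  and Ov_one [simp]: "1 \<in> Ov"
  by (auto simp: mem_Ov_iff val_one)

lemma Ov_uminus [simp]: "a \<in> Ov \<Longrightarrow> - a \<in> Ov"
  unfolding mem_Ov_iff by (cases "a = 0") (auto simp: val_uminus)

lemma Ov_add [simp]: "a \<in> Ov \<Longrightarrow> b \<in> Ov \<Longrightarrow> a + b \<in> Ov"
  unfolding mem_Ov_iff using val_add[of a b] by (cases "a = 0 \<or> b = 0 \<or> a + b = 0") auto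

lemma Ov_mult [simp]: "a \<in> Ov \<Longrightarrow> b \<in> Ov \<Longrightarrow> a * b \<in> Ov"
  unfolding mem_Ov_iff by (cases "a = 0 \<or> b = 0") (auto simp: val_mult)

lemma Ov_diff [simp]: "a \<in> Ov \<Longrightarrow> b \<in> Ov \<Longrightarrow> a - b \<in> Ov"
  using Ov_add[of a "- b"] by simp

lemma Ov_divide: "a \<in> Ov \<Longrightarrow> b \<noteq> 0 \<Longrightarrow> a = 0 \<or> v b \<le> v a \<Longrightarrow> a / b \<in> Ov"
  unfolding mem_Ov_iff by (cases "a = 0") (auto simp: divide_inverse val_mult val_inverse)

lemma Ov_divide_unit: "a \<in> Ov \<Longrightarrow> a \<notin> Pv \<Longrightarrow> b \<in> Ov \<Longrightarrow> b / a \<in> Ov \<and> a \<noteq> 0"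
  using Ov_divide[of b a] by (auto simp: mem_Ov_iff mem_Pv_iff)

lemma Pv_add: "a \<in> Pv \<Longrightarrow> b \<in> Pv \<Longrightarrow> a + b \<in> Pv"
  unfolding mem_Pv_iff using val_add[of a b] by (cases "a = 0 \<or> b = 0 \<or> a + b = 0") auto

lemma Pv_uminus: "a \<in> Pv \<Longrightarrow> - a \<in> Pv"
  unfolding mem_Pv_iff by (cases "a = 0") (auto simp: val_uminus)

lemma Pv_diff: "a \<in> Pv \<Longrightarrow> b \<in> Pv \<Longrightarrow> a - b \<in> Pv"
  using Pv_add[of a "- b"] Pv_uminus[of b] by simp

lemma Pv_mult: "a \<in> Pv \<Longrightarrow> b \<in> Ov \<Longrightarrow> a * b \<in> Pv"
  unfolding mem_Pv_iff mem_Ov_iff by (cases "a = 0 \<or> b = 0") (auto simp: val_mult)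

lemma one_notin_Pv: "1 \<notin> Pv"
  by (simp add: mem_Pv_iff val_one)

end

text \<open>Entry lemmas are stated with \<open>Suc 0\<close>, the simp normal form of the index \<open>1::nat\<close>.\<close>

declare index_mult_mat(1) [simp del]

lemma index_mult_mat_4 [simp]:
  "dim_col A = 4 \<Longrightarrow> dim_row B = 4 \<Longrightarrow> i < dim_row A \<Longrightarrow> j < dim_col B \<Longrightarrow>
   (A * B) $$ (i, j) = A $$ (i, 0) * B $$ (0, j) + A $$ (i, Suc 0) * B $$ (Suc 0, j)
     + A $$ (i, 2) * B $$ (2, j) + A $$ (i, 3) * B $$ (3, j)"
  by (simp add: index_mult_mat(1) scalar_prod_def eval_nat_numeral atLeast0_lessThan_Suc ac_simps)

lemma index_mult_mat_2 [simp]: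
  "dim_col A = 2 \<Longrightarrow> dim_row B = 2 \<Longrightarrow> i < dim_row A \<Longrightarrow> j < dim_col B \<Longrightarrow>
   (A * B) $$ (i, j) = A $$ (i, 0) * B $$ (0, j) + A $$ (i, Suc 0) * B $$ (Suc 0, j)"
  by (simp add: index_mult_mat(1) scalar_prod_def eval_nat_numeral atLeast0_lessThan_Suc ac_simps)

lemma less_4_cases: "(i::nat) < 4 \<longleftrightarrow> i = 0 \<or> i = 1 \<or> i = 2 \<or> i = 3"
  by auto

lemma less_2_cases: "(i::nat) < 2 \<longleftrightarrow> i = 0 \<or> i = 1"
  by auto

lemma all_less_4: "(\<forall>i::nat<4. P i) \<longleftrightarrow> P 0 \<and> P 1 \<and> P 2 \<and> P 3"
  unfolding less_4_cases by blast

lemma eq_mat_4I: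
  assumes "A \<in> carrier_mat 4 4" "B \<in> carrier_mat 4 4"
    "A$$(0,0) = B$$(0,0)" "A$$(0,Suc 0) = B$$(0,Suc 0)" "A$$(0,2) = B$$(0,2)" "A$$(0,3) = B$$(0,3)"
    "A$$(Suc 0,0) = B$$(Suc 0,0)" "A$$(Suc 0,Suc 0) = B$$(Suc 0,Suc 0)" "A$$(Suc 0,2) = B$$(Suc 0,2)" "A$$(Suc 0,3) = B$$(Suc 0,3)"
    "A$$(2,0) = B$$(2,0)" "A$$(2,Suc 0) = B$$(2,Suc 0)" "A$$(2,2) = B$$(2,2)" "A$$(2,3) = B$$(2,3)"
    "A$$(3,0) = B$$(3,0)" "A$$(3,Suc 0) = B$$(3,Suc 0)" "A$$(3,2) = B$$(3,2)" "A$$(3,3) = B$$(3,3)"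
  shows "A = B"
  by (rule eq_matI) (use assms in \<open>auto simp: less_4_cases\<close>)

lemma det_2x2:
  assumes "(A :: 'a::comm_ring_1 mat) \<in> carrier_mat 2 2"
  shows "det A = A$$(0,0) * A$$(Suc 0,Suc 0) - A$$(0,Suc 0) * A$$(Suc 0,0)"
proof -
  have det_1x1: "det B = B$$(0,0)" if "(B::'a mat) \<in> carrier_mat 1 1" for B
    using laplace_expansion_column[OF that, of 0] that by (simp add: cofactor_def mat_delete_def)
  show ?thesis
    using laplace_expansion_column[OF assms, of 0] assms
    by (simp add: cofactor_def numeral_2_eq_2 lessThan_Suc det_1x1 mat_delete_def)
qed

definition mat2 :: "'a \<Rightarrow> 'a \<Rightarrow> 'a \<Rightarrow> 'a \<Rightarrow> 'a mat" where
  "mat2 a b c d = mat 2 2 (\<lambda>(i, j). if i = 0 then (if j = 0 then a else b) else (if j = 0 then c else d))"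

lemma mat2_carrier [simp]:
  "mat2 a b c d \<in> carrier_mat 2 2" "dim_row (mat2 a b c d) = 2" "dim_col (mat2 a b c d) = 2"
  by (auto simp: mat2_def)

lemma index_mat2 [simp]:
  "mat2 a b c d $$ (0,0) = a" "mat2 a b c d $$ (0,Suc 0) = b"
  "mat2 a b c d $$ (Suc 0,0) = c" "mat2 a b c d $$ (Suc 0,Suc 0) = d"
  by (auto simp: mat2_def)

lemma eq_mat2I:
  assumes "A \<in> carrier_mat 2 2" "B \<in> carrier_mat 2 2"
    "A$$(0,0) = B$$(0,0)" "A$$(0,Suc 0) = B$$(0,Suc 0)" "A$$(Suc 0,0) = B$$(Suc 0,0)" "A$$(Suc 0,Suc 0) = B$$(Suc 0,Suc 0)"
  shows "A = B"
  by (rule eq_matI) (use assms in \<open>auto simp: less_2_cases\<close>)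

lemma mat2_eta: "A \<in> carrier_mat 2 2 \<Longrightarrow> A = mat2 (A$$(0,0)) (A$$(0,1)) (A$$(1,0)) (A$$(1,1))"
  by (rule eq_mat2I) simp_all

lemma carrier_mat_2_cases:
  assumes "A \<in> carrier_mat 2 2"
  obtains a b c d where "A = mat2 a b c d"
  using mat2_eta[OF assms] by blast

lemma mat2_eq_iff: "mat2 a b c d = mat2 a' b' c' d' \<longleftrightarrow> a = a' \<and> b = b' \<and> c = c' \<and> d = d'"
  by (metis index_mat2)

lemma one_mat2: "1\<^sub>m 2 = mat2 1 0 0 (1::'a::comm_ring_1)"
  by (rule eq_mat2I) simp_all

lemma mat2_mult: "mat2 a b c d * mat2 p q r s = mat2 (a*p+b*r) (a*q+b*s) (c*p+d*r) (c*q+d*s)"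
  by (rule eq_mat2I) (auto intro!: mult_carrier_mat)

lemma transpose_mat2: "transpose_mat (mat2 a b c d) = mat2 a c b d"
  by (rule eq_mat2I) simp_all

lemma Qmat_carrier [simp]: "Qmat \<in> carrier_mat 2 2"
  by (simp add: Qmat_def)

lemma Qmat_conj_mat2: "Qmat * mat2 a b c d * Qmat = mat2 d c b (a::'a::field)"
  by (rule eq_mat2I) (auto intro!: mult_carrier_mat simp: Qmat_def)

lemma det_mat2: "det (mat2 a b c d) = a * d - b * (c::'a::comm_ring_1)"
  by (simp add: det_2x2)

lemma transpose_left_inverse_unique:
  fixes A B X :: "'a::comm_ring_1 mat"
  assumes A: "A \<in> carrier_mat n n" and B: "B \<in> carrier_mat n n" and X: "X \<in> carrier_mat n n"
    and AB: "A * B = 1\<^sub>m n" and AX: "transpose_mat A * X = 1\<^sub>m n"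
  shows "X = transpose_mat B"
proof -
  have BA: "transpose_mat B * transpose_mat A = 1\<^sub>m n"
    using transpose_mult[OF A B] AB by simp
  have "X = (transpose_mat B * transpose_mat A) * X"
    using X by (simp add: BA)
  also have "\<dots> = transpose_mat B * (transpose_mat A * X)"
    using A B X by (intro assoc_mult_mat) auto
  finally show ?thesis
    using B by (simp add: AX)
qed

definition block_diag :: "'a::field mat \<Rightarrow> 'a mat \<Rightarrow> 'a mat" where
  "block_diag A D = four_block_mat A (0\<^sub>m 2 2) (0\<^sub>m 2 2) D"

lemma block_diag_carrier [simp]:
  assumes "A \<in> carrier_mat 2 2" "D \<in> carrier_mat 2 2"
  shows "block_diag A D \<in> carrier_mat 4 4" "dim_row (block_diag A D) = 4" "dim_col (block_diag A D) = 4"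
  using assms by (auto simp: block_diag_def)

lemma index_block_diag [simp]:
  assumes "A \<in> carrier_mat 2 2" "D \<in> carrier_mat 2 2"
  shows
    "block_diag A D $$ (0,0) = A$$(0,0)" "block_diag A D $$ (0,Suc 0) = A$$(0,Suc 0)"
    "block_diag A D $$ (0,2) = 0" "block_diag A D $$ (0,3) = 0"
    "block_diag A D $$ (Suc 0,0) = A$$(Suc 0,0)" "block_diag A D $$ (Suc 0,Suc 0) = A$$(Suc 0,Suc 0)"
    "block_diag A D $$ (Suc 0,2) = 0" "block_diag A D $$ (Suc 0,3) = 0"
    "block_diag A D $$ (2,0) = 0" "block_diag A D $$ (2,Suc 0) = 0"
    "block_diag A D $$ (2,2) = D$$(0,0)" "block_diag A D $$ (2,3) = D$$(0,Suc 0)"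
    "block_diag A D $$ (3,0) = 0" "block_diag A D $$ (3,Suc 0) = 0"
    "block_diag A D $$ (3,2) = D$$(Suc 0,0)" "block_diag A D $$ (3,3) = D$$(Suc 0,Suc 0)"
  using assms by (auto simp: block_diag_def)

lemma embed_mid_carrier [simp]:
  "embed_mid B \<in> carrier_mat 4 4" "dim_row (embed_mid B) = 4" "dim_col (embed_mid B) = 4"
  by (auto simp: embed_mid_def)

lemma index_embed_mid [simp]:
  "embed_mid B $$ (0,0) = 1" "embed_mid B $$ (0,Suc 0) = 0"
  "embed_mid B $$ (0,2) = 0" "embed_mid B $$ (0,3) = 0"
  "embed_mid B $$ (Suc 0,0) = 0" "embed_mid B $$ (Suc 0,Suc 0) = B$$(0,0)"
  "embed_mid B $$ (Suc 0,2) = B$$(0,Suc 0)" "embed_mid B $$ (Suc 0,3) = 0"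
  "embed_mid B $$ (2,0) = 0" "embed_mid B $$ (2,Suc 0) = B$$(Suc 0,0)"
  "embed_mid B $$ (2,2) = B$$(Suc 0,Suc 0)" "embed_mid B $$ (2,3) = 0"
  "embed_mid B $$ (3,0) = 0" "embed_mid B $$ (3,Suc 0) = 0"
  "embed_mid B $$ (3,2) = 0" "embed_mid B $$ (3,3) = 1"
  by (auto simp: embed_mid_def)

lemma Jmat_carrier [simp]: "Jmat \<in> carrier_mat 4 4" "dim_row Jmat = 4" "dim_col Jmat = 4"
  by (auto simp: Jmat_def)

lemma index_Jmat [simp]:
  "Jmat $$ (0,0) = 0" "Jmat $$ (0,Suc 0) = 0" "Jmat $$ (0,2) = 0" "Jmat $$ (0,3) = 1"
  "Jmat $$ (Suc 0,0) = 0" "Jmat $$ (Suc 0,Suc 0) = 0" "Jmat $$ (Suc 0,2) = 1" "Jmat $$ (Suc 0,3) = 0"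
  "Jmat $$ (2,0) = 0" "Jmat $$ (2,Suc 0) = -1" "Jmat $$ (2,2) = 0" "Jmat $$ (2,3) = 0"
  "Jmat $$ (3,0) = -1" "Jmat $$ (3,Suc 0) = 0" "Jmat $$ (3,2) = 0" "Jmat $$ (3,3) = 0"
  by (auto simp: Jmat_def)

lemma one_mat_4_block_diag: "1\<^sub>m 4 = block_diag (mat2 1 0 0 1) (mat2 1 0 0 (1::'a::field))"
  by (rule eq_mat_4I) simp_all

lemma one_mat_4_embed_mid: "1\<^sub>m 4 = embed_mid (mat2 1 0 0 (1::'a::field))"
  by (rule eq_mat_4I) simp_all

lemma block_diag_mult:
  "block_diag (mat2 a b c d) (mat2 e f g h) * block_diag (mat2 a' b' c' d') (mat2 e' f' g' h') =
   block_diag (mat2 (a*a'+b*c') (a*b'+b*d') (c*a'+d*c') (c*b'+d*d'))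
              (mat2 (e*e'+f*g') (e*f'+f*h') (g*e'+h*g') (g*f'+h*h'))"
  by (rule eq_mat_4I) (auto intro!: mult_carrier_mat)

lemma embed_mid_mult:
  "embed_mid (mat2 a b c d) * embed_mid (mat2 a' b' c' d') =
   embed_mid (mat2 (a*a'+b*c') (a*b'+b*d') (c*a'+d*c') (c*b'+d*d'))"
  by (rule eq_mat_4I) (auto intro!: mult_carrier_mat)

section \<open>The symplectic form\<close>

text \<open>\<open>sympl_form g i j\<close> is \<open>\<omega>(g e\<^sub>i, g e\<^sub>j)\<close>, the (i,j) entry of \<open>g\<^sup>T J g\<close>.\<close>

definition sympl_form :: "'a::field mat \<Rightarrow> nat \<Rightarrow> nat \<Rightarrow> 'a" where
  "sympl_form g i j = g$$(0,i) * g$$(3,j) + g$$(1,i) * g$$(2,j) - g$$(2,i) * g$$(1,j) - g$$(3,i) * g$$(0,j)"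

lemma index_sympl_conj:
  "g \<in> carrier_mat 4 4 \<Longrightarrow> i < 4 \<Longrightarrow> j < 4 \<Longrightarrow>
   (transpose_mat g * Jmat * g) $$ (i, j) = sympl_form g i j"
  by (simp add: sympl_form_def algebra_simps)

lemma symplecticI:
  assumes g: "g \<in> carrier_mat 4 4"
    and "sympl_form g 0 1 = 0" "sympl_form g 0 2 = 0" "sympl_form g 0 3 = 1"
        "sympl_form g 1 2 = 1" "sympl_form g 1 3 = 0" "sympl_form g 2 3 = 0"
  shows "transpose_mat g * Jmat * g = Jmat"
proof (rule eq_matI)
  fix i j assume "i < dim_row Jmat" "j < dim_col Jmat"
  then have ij: "i < 4" "j < 4" by auto
  have antisym: "sympl_form g j i = - sympl_form g i j" "sympl_form g i i = 0" for i j
    by (simp_all add: sympl_form_def algebra_simps)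
  from ij have "sympl_form g i j = Jmat $$ (i, j)"
    unfolding less_4_cases
    by (elim disjE) (use assms(2-7) in \<open>simp_all add: antisym(2) antisym(1)[of "Suc 0" 0] antisym(1)[of 2 0]
      antisym(1)[of 3 0] antisym(1)[of 2 "Suc 0"] antisym(1)[of 3 "Suc 0"] antisym(1)[of 3 2]\<close>)
  then show "(transpose_mat g * Jmat * g) $$ (i, j) = Jmat $$ (i, j)"
    by (simp only: index_sympl_conj[OF g ij])
qed (use g in auto)

context valued_field
begin

lemma mat2_in_int_mat_iff: "mat2 a b c d \<in> int_mat v 2 \<longleftrightarrow> a \<in> Ov \<and> b \<in> Ov \<and> c \<in> Ov \<and> d \<in> Ov"
  by (auto simp: int_mat_def less_2_cases)

lemma Sp4_OD:
  assumes "g \<in> Sp4_O v"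
  shows "g \<in> carrier_mat 4 4" "dim_row g = 4" "dim_col g = 4"
    "\<And>i j. i < 4 \<Longrightarrow> j < 4 \<Longrightarrow> g$$(i,j) \<in> Ov"
    "\<And>i j. i < 4 \<Longrightarrow> j < 4 \<Longrightarrow> sympl_form g i j = Jmat $$ (i,j)"
proof -
  show g: "g \<in> carrier_mat 4 4" and "\<And>i j. i < 4 \<Longrightarrow> j < 4 \<Longrightarrow> g$$(i,j) \<in> Ov"
    using assms unfolding Sp4_O_def int_mat_def by blast+
  then show "dim_row g = 4" "dim_col g = 4" by auto
  show "\<And>i j. i < 4 \<Longrightarrow> j < 4 \<Longrightarrow> sympl_form g i j = Jmat $$ (i,j)"
    using assms g index_sympl_conj unfolding Sp4_O_def by force
qed

lemma int_mat_4_mult: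
  assumes "g \<in> int_mat v 4" "h \<in> int_mat v 4"
  shows "g * h \<in> int_mat v 4"
proof -
  have g: "g \<in> carrier_mat 4 4" "\<And>i j. i < 4 \<Longrightarrow> j < 4 \<Longrightarrow> g $$ (i,j) \<in> Ov"
    and h: "h \<in> carrier_mat 4 4" "\<And>i j. i < 4 \<Longrightarrow> j < 4 \<Longrightarrow> h $$ (i,j) \<in> Ov"
    using assms unfolding int_mat_def by blast+
  have "(g * h) $$ (i,j) \<in> Ov" if "i < 4" "j < 4" for i j
    using g(1) h(1) that by (subst index_mult_mat_4) (auto intro!: Ov_add Ov_mult g(2) h(2))
  with g(1) h(1) show ?thesis
    unfolding int_mat_def by (blast intro: mult_carrier_mat)
qed

lemma Sp4_O_mult:
  assumes "g \<in> Sp4_O v" "h \<in> Sp4_O v"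
  shows "g * h \<in> Sp4_O v"
proof -
  have g: "g \<in> carrier_mat 4 4" and h: "h \<in> carrier_mat 4 4"
    and sg: "transpose_mat g * Jmat * g = Jmat" and sh: "transpose_mat h * Jmat * h = Jmat"
    using assms unfolding Sp4_O_def int_mat_def by blast+
  have "transpose_mat (g * h) * Jmat * (g * h) = transpose_mat h * (transpose_mat g * Jmat * g) * h"
    using g h by (simp add: transpose_mult assoc_mult_mat[of _ 4 4 _ 4 _ 4] mult_carrier_mat[of _ 4 4 _ 4])
  then have "transpose_mat (g * h) * Jmat * (g * h) = Jmat"
    by (simp add: sg sh)
  with assms show ?thesis
    unfolding Sp4_O_def by (blast intro: int_mat_4_mult)
qed

lemma one_in_Sp4_O: "1\<^sub>m 4 \<in> Sp4_O v"
  unfolding Sp4_O_def int_mat_def all_less_4 by (auto intro!: symplecticI simp: sympl_form_def)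

text \<open>An element of K_1 is \<open>diag(A, Q (A\<^sup>T)\<^sup>-\<^sup>1 Q)\<close>; for \<open>A\<^sup>-\<^sup>1 = (p q; r s)\<close> the lower block is \<open>(s q; r p)\<close>.\<close>

definition GL2_O_pair :: "'a \<Rightarrow> 'a \<Rightarrow> 'a \<Rightarrow> 'a \<Rightarrow> 'a \<Rightarrow> 'a \<Rightarrow> 'a \<Rightarrow> 'a \<Rightarrow> bool" where
  "GL2_O_pair a b c d p q r s \<longleftrightarrow>
     a \<in> Ov \<and> b \<in> Ov \<and> c \<in> Ov \<and> d \<in> Ov \<and> p \<in> Ov \<and> q \<in> Ov \<and> r \<in> Ov \<and> s \<in> Ov \<and>
     a*p+b*r = 1 \<and> a*q+b*s = 0 \<and> c*p+d*r = 0 \<and> c*q+d*s = 1 \<and>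
     p*a+q*c = 1 \<and> p*b+q*d = 0 \<and> r*a+s*c = 0 \<and> r*b+s*d = 1"

definition SL2_O_entries :: "'a \<Rightarrow> 'a \<Rightarrow> 'a \<Rightarrow> 'a \<Rightarrow> bool" where
  "SL2_O_entries a b c d \<longleftrightarrow> a \<in> Ov \<and> b \<in> Ov \<and> c \<in> Ov \<and> d \<in> Ov \<and> a*d - b*c = 1"

lemma GL2_O_pair_sym: "GL2_O_pair a b c d p q r s \<Longrightarrow> GL2_O_pair p q r s a b c d"
  unfolding GL2_O_pair_def by blast

lemma block_diag_in_K1:
  assumes "GL2_O_pair a b c d p q r s"
  shows "block_diag (mat2 a b c d) (mat2 s q r p) \<in> K1 v"
proof -
  have "mat2 a b c d \<in> int_mat v 2" "mat2 p q r s \<in> int_mat v 2"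
    "mat2 a b c d * mat2 p q r s = 1\<^sub>m 2" "mat2 p q r s * mat2 a b c d = 1\<^sub>m 2"
    using assms unfolding GL2_O_pair_def mat2_in_int_mat_iff mat2_mult one_mat2 mat2_eq_iff by simp_all
  then have "mat2 a b c d \<in> GL2_O v"
    unfolding GL2_O_def by blast
  moreover have "Qmat * mat2 s q r p * Qmat * transpose_mat (mat2 a b c d) = 1\<^sub>m 2"
    "transpose_mat (mat2 a b c d) * (Qmat * mat2 s q r p * Qmat) = 1\<^sub>m 2"
    using assms unfolding GL2_O_pair_def Qmat_conj_mat2 transpose_mat2 mat2_mult one_mat2 mat2_eq_iff
    by (simp_all add: mult.commute)
  ultimately show ?thesis
    unfolding K1_def block_diag_def using mat2_carrier(1)[of s q r p] by blast
qed

lemma K1_cases: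
  assumes "k \<in> K1 v"
  obtains a b c d p q r s
  where "GL2_O_pair a b c d p q r s" "k = block_diag (mat2 a b c d) (mat2 s q r p)"
proof -
  obtain A D B where k: "k = block_diag A D" and A: "A \<in> int_mat v 2" and D: "D \<in> carrier_mat 2 2"
    and B: "B \<in> int_mat v 2" and AB: "A * B = 1\<^sub>m 2" and BA: "B * A = 1\<^sub>m 2"
    and AX: "transpose_mat A * (Qmat * D * Qmat) = 1\<^sub>m 2"
    using assms unfolding K1_def GL2_O_def block_diag_def by blast
  obtain a b c d where Ae: "A = mat2 a b c d"
    using A unfolding int_mat_def by (blast elim: carrier_mat_2_cases)
  obtain p q r s where Be: "B = mat2 p q r s"
    using B unfolding int_mat_def by (blast elim: carrier_mat_2_cases)
  obtain x y z w where De: "D = mat2 x y z w"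
    using D by (rule carrier_mat_2_cases)
  have "Qmat * D * Qmat = transpose_mat B"
    using AB AX A B D
    by (intro transpose_left_inverse_unique[of A 2 B]) (auto simp: int_mat_def intro!: mult_carrier_mat)
  then have "D = mat2 s q r p"
    by (simp add: De Be Qmat_conj_mat2 transpose_mat2 mat2_eq_iff)
  moreover have "GL2_O_pair a b c d p q r s"
    using A B AB BA by (simp add: Ae Be mat2_in_int_mat_iff GL2_O_pair_def mat2_mult one_mat2 mat2_eq_iff)
  ultimately show ?thesis
    using that[of a b c d p q r s] k Ae by simp
qed

lemma embed_mid_in_K2: "SL2_O_entries a b c d \<Longrightarrow> embed_mid (mat2 a b c d) \<in> K2 v"
  unfolding K2_def SL2_O_def SL2_O_entries_def by (simp add: mat2_in_int_mat_iff det_mat2)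

lemma K2_cases:
  assumes "k \<in> K2 v"
  obtains a b c d where "SL2_O_entries a b c d" "k = embed_mid (mat2 a b c d)"
proof -
  obtain B where B: "B \<in> int_mat v 2" "det B = 1" and k: "k = embed_mid B"
    using assms unfolding K2_def SL2_O_def by blast
  then obtain a b c d where "B = mat2 a b c d"
    unfolding int_mat_def by (blast elim: carrier_mat_2_cases)
  with B k show ?thesis
    using that[of a b c d] by (simp add: SL2_O_entries_def mat2_in_int_mat_iff det_mat2)
qed

lemma K1_subset_Sp4_O:
  assumes "k \<in> K1 v"
  shows "k \<in> Sp4_O v"
proof -
  obtain a b c d p q r s where P: "GL2_O_pair a b c d p q r s"
    and k: "k = block_diag (mat2 a b c d) (mat2 s q r p)"
    using assms by (rule K1_cases)
  have "k \<in> int_mat v 4"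
    using P unfolding k int_mat_def all_less_4 GL2_O_pair_def by simp
  moreover have "transpose_mat k * Jmat * k = Jmat"
    unfolding k by (rule symplecticI) (use P in \<open>simp_all add: GL2_O_pair_def sympl_form_def mult.commute\<close>)
  ultimately show ?thesis
    unfolding Sp4_O_def by blast
qed

lemma K2_subset_Sp4_O:
  assumes "k \<in> K2 v"
  shows "k \<in> Sp4_O v"
proof -
  obtain a b c d where P: "SL2_O_entries a b c d" and k: "k = embed_mid (mat2 a b c d)"
    using assms by (rule K2_cases)
  have "k \<in> int_mat v 4"
    using P unfolding k int_mat_def all_less_4 SL2_O_entries_def by simp
  moreover have "transpose_mat k * Jmat * k = Jmat"
    unfolding k by (rule symplecticI) (use P in \<open>simp_all add: SL2_O_entries_def sympl_form_def algebra_simps\<close>)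
  ultimately show ?thesis
    unfolding Sp4_O_def by blast
qed

lemma one_in_K1: "1\<^sub>m 4 \<in> K1 v"
  unfolding one_mat_4_block_diag
  using block_diag_in_K1[of 1 0 0 1 1 0 0 1] by (simp add: GL2_O_pair_def)

lemma one_in_K2: "1\<^sub>m 4 \<in> K2 v"
  unfolding one_mat_4_embed_mid by (rule embed_mid_in_K2) (simp add: SL2_O_entries_def)

lemma K1_carrier: "k \<in> K1 v \<Longrightarrow> k \<in> carrier_mat 4 4"
  by (erule K1_cases) simp

lemma K2_carrier: "k \<in> K2 v \<Longrightarrow> k \<in> carrier_mat 4 4"
  by (erule K2_cases) simp

lemma K1_inverse:
  assumes "k \<in> K1 v"
  obtains k' where "k' \<in> K1 v" "k' * k = 1\<^sub>m 4"
proof -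
  obtain a b c d p q r s where P: "GL2_O_pair a b c d p q r s"
    and k: "k = block_diag (mat2 a b c d) (mat2 s q r p)"
    using assms by (rule K1_cases)
  have "block_diag (mat2 p q r s) (mat2 d b c a) * k = 1\<^sub>m 4"
    using P unfolding k block_diag_mult one_mat_4_block_diag mat2_eq_iff GL2_O_pair_def
    by (simp add: algebra_simps)
  with block_diag_in_K1[OF GL2_O_pair_sym[OF P]] that show ?thesis
    by blast
qed

lemma K2_inverse:
  assumes "k \<in> K2 v"
  obtains k' where "k' \<in> K2 v" "k' * k = 1\<^sub>m 4"
proof -
  obtain a b c d where P: "SL2_O_entries a b c d" and k: "k = embed_mid (mat2 a b c d)"
    using assms by (rule K2_cases)
  have "SL2_O_entries d (-b) (-c) a"
    using P by (simp add: SL2_O_entries_def algebra_simps)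
  moreover have "embed_mid (mat2 d (-b) (-c) a) * k = 1\<^sub>m 4"
    using P unfolding k embed_mid_mult one_mat_4_embed_mid mat2_eq_iff SL2_O_entries_def
    by (simp add: algebra_simps)
  ultimately show ?thesis
    using that embed_mid_in_K2 by blast
qed

section \<open>Products of alternating factors\<close>

fun K12_pow :: "nat \<Rightarrow> 'a mat set" where
  "K12_pow 0 = {1\<^sub>m 4}"
| "K12_pow (Suc n) = {a * (b * w) | a b w. a \<in> K1 v \<and> b \<in> K2 v \<and> w \<in> K12_pow n}"

lemma K12_pow_SucI: "a \<in> K1 v \<Longrightarrow> b \<in> K2 v \<Longrightarrow> w \<in> K12_pow n \<Longrightarrow> a * (b * w) \<in> K12_pow (Suc n)"
  by auto

lemma K12_pow_carrier: "w \<in> K12_pow n \<Longrightarrow> w \<in> carrier_mat 4 4"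
  by (induction n arbitrary: w) (auto simp: mult_carrier_mat[of _ 4 4 _ 4] K1_carrier K2_carrier)

lemma K12_pow_mult: "x \<in> K12_pow n \<Longrightarrow> y \<in> K12_pow m \<Longrightarrow> x * y \<in> K12_pow (n + m)"
proof (induction n arbitrary: x)
  case 0
  then show ?case
    using K12_pow_carrier[OF 0(2)] by simp
next
  case (Suc n)
  then obtain a b w where ab: "a \<in> K1 v" "b \<in> K2 v" and w: "w \<in> K12_pow n" and x: "x = a * (b * w)"
    by auto
  have "a \<in> carrier_mat 4 4" "b \<in> carrier_mat 4 4" "w \<in> carrier_mat 4 4" "y \<in> carrier_mat 4 4"
    using ab w Suc.prems(2) by (auto intro: K1_carrier K2_carrier K12_pow_carrier)
  then have "x * y = a * (b * (w * y))"
    unfolding x by (simp add: assoc_mult_mat[of _ 4 4 _ 4 _ 4] mult_carrier_mat[of _ 4 4 _ 4])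
  with K12_pow_SucI[OF ab Suc.IH[OF w Suc.prems(2)]] show ?case
    by simp
qed

lemma one_in_K12_pow: "1\<^sub>m 4 \<in> K12_pow n"
proof (induction n)
  case (Suc n)
  then show ?case
    using K12_pow_SucI[OF one_in_K1 one_in_K2 Suc] by simp
qed simp

lemma K12_pow_mono:
  assumes "x \<in> K12_pow n" "n \<le> m"
  shows "x \<in> K12_pow m"
  using K12_pow_mult[OF assms(1) one_in_K12_pow[of "m - n"]] assms K12_pow_carrier[OF assms(1)]
  by simp

lemma K1_in_K12_pow: "k \<in> K1 v \<Longrightarrow> k \<in> K12_pow 1"
  using K12_pow_SucI[OF _ one_in_K2 one_in_K12_pow, of k 0] K1_carrier[of k] by simp

lemma K2_in_K12_pow: "k \<in> K2 v \<Longrightarrow> k \<in> K12_pow 1"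
  using K12_pow_SucI[OF one_in_K1 _ one_in_K12_pow, of k 0] K2_carrier[of k] by simp

lemma K12_pow_cancel_left:
  assumes k: "k \<in> K1 v \<or> k \<in> K2 v" and g: "g \<in> carrier_mat 4 4" and kg: "k * g \<in> K12_pow n"
  shows "g \<in> K12_pow (n + 1)"
proof -
  obtain k' where k': "k' \<in> K1 v \<or> k' \<in> K2 v" "k' * k = 1\<^sub>m 4"
    using k K1_inverse K2_inverse by metis
  have "k' * (k * g) \<in> K12_pow (1 + n)"
    using k' kg by (blast intro: K12_pow_mult K1_in_K12_pow K2_in_K12_pow)
  moreover have "k \<in> carrier_mat 4 4" "k' \<in> carrier_mat 4 4"
    using k k'(1) K1_carrier K2_carrier by blast+
  then have "k' * (k * g) = g"
    using g k'(2) by (simp add: assoc_mult_mat[symmetric, of _ 4 4 _ 4 _ 4])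
  ultimately show ?thesis by (simp add: add.commute)
qed

lemma K12_pow_alternating_list:
  "w \<in> K12_pow n \<Longrightarrow> \<exists>ks. length ks = 2 * n \<and>
     (\<forall>i<2*n. (even i \<longrightarrow> ks ! i \<in> K1 v) \<and> (odd i \<longrightarrow> ks ! i \<in> K2 v)) \<and> w = foldr (*) ks (1\<^sub>m 4)"
proof (induction n arbitrary: w)
  case (Suc n)
  then obtain a b w' ks where ab: "a \<in> K1 v" "b \<in> K2 v" and w: "w = a * (b * w')"
    and ks: "length ks = 2 * n" "\<forall>i<2*n. (even i \<longrightarrow> ks ! i \<in> K1 v) \<and> (odd i \<longrightarrow> ks ! i \<in> K2 v)"
       "w' = foldr (*) ks (1\<^sub>m 4)"
    by fastforce
  have "\<forall>i<2 * Suc n. (even i \<longrightarrow> (a # b # ks) ! i \<in> K1 v) \<and> (odd i \<longrightarrow> (a # b # ks) ! i \<in> K2 v)"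
  proof (intro allI impI)
    fix i assume i: "i < 2 * Suc n"
    consider "i = 0" | "i = 1" | "i = Suc (Suc (i - 2))" "i - 2 < 2 * n"
      using i by (cases "i < 2") (auto simp: less_2_cases)
    then show "(even i \<longrightarrow> (a # b # ks) ! i \<in> K1 v) \<and> (odd i \<longrightarrow> (a # b # ks) ! i \<in> K2 v)"
      by cases (use ab ks in auto)
  qed
  with ks w show ?case
    by (intro exI[of _ "a # b # ks"]) simp
qed simp

lemma alternating_product_in_Sp4_O:
  assumes "\<forall>i<length ks. (even i \<longrightarrow> ks ! i \<in> K1 v) \<and> (odd i \<longrightarrow> ks ! i \<in> K2 v)"
  shows "foldr (*) ks (1\<^sub>m 4) \<in> Sp4_O v"
proof -
  have "\<forall>k\<in>set ks. k \<in> Sp4_O v"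
    using assms K1_subset_Sp4_O K2_subset_Sp4_O by (metis in_set_conv_nth)
  then show ?thesis
    by (induction ks) (simp_all add: one_in_Sp4_O Sp4_O_mult)
qed

end

definition x_elem :: "'a::field \<Rightarrow> 'a mat" where
  "x_elem a = block_diag (mat2 1 a 0 1) (mat2 1 (-a) 0 1)"

definition w_elem :: "'a::field mat" where
  "w_elem = block_diag (mat2 0 1 1 0) (mat2 0 1 1 0)"

definition u_elem :: "'a::field \<Rightarrow> 'a mat" where
  "u_elem b = embed_mid (mat2 0 1 (-1) 0) * (x_elem (-b) * embed_mid (mat2 0 (-1) 1 0))"

definition z_elem :: "'a::field \<Rightarrow> 'a mat" where
  "z_elem c = w_elem * (embed_mid (mat2 1 c 0 1) * w_elem)"

lemma x_elem_carrier [simp]: "x_elem a \<in> carrier_mat 4 4" "dim_row (x_elem a) = 4" "dim_col (x_elem a) = 4"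
  by (simp_all add: x_elem_def)

lemma w_elem_carrier [simp]: "w_elem \<in> carrier_mat 4 4" "dim_row w_elem = 4" "dim_col w_elem = 4"
  by (simp_all add: w_elem_def)

lemma u_elem_carrier [simp]: "u_elem b \<in> carrier_mat 4 4" "dim_row (u_elem b) = 4" "dim_col (u_elem b) = 4"
  by (simp_all add: u_elem_def mult_carrier_mat[of _ 4 4 _ 4])

lemma z_elem_carrier [simp]: "z_elem c \<in> carrier_mat 4 4" "dim_row (z_elem c) = 4" "dim_col (z_elem c) = 4"
  by (simp_all add: z_elem_def mult_carrier_mat[of _ 4 4 _ 4])

lemma index_x_elem [simp]:
  "x_elem a $$ (0,0) = 1" "x_elem a $$ (0,Suc 0) = a" "x_elem a $$ (0,2) = 0" "x_elem a $$ (0,3) = 0"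
  "x_elem a $$ (Suc 0,0) = 0" "x_elem a $$ (Suc 0,Suc 0) = 1" "x_elem a $$ (Suc 0,2) = 0" "x_elem a $$ (Suc 0,3) = 0"
  "x_elem a $$ (2,0) = 0" "x_elem a $$ (2,Suc 0) = 0" "x_elem a $$ (2,2) = 1" "x_elem a $$ (2,3) = -a"
  "x_elem a $$ (3,0) = 0" "x_elem a $$ (3,Suc 0) = 0" "x_elem a $$ (3,2) = 0" "x_elem a $$ (3,3) = 1"
  by (simp_all add: x_elem_def)

lemma index_w_elem [simp]:
  "w_elem $$ (0,0) = 0" "w_elem $$ (0,Suc 0) = 1" "w_elem $$ (0,2) = 0" "w_elem $$ (0,3) = 0"
  "w_elem $$ (Suc 0,0) = 1" "w_elem $$ (Suc 0,Suc 0) = 0" "w_elem $$ (Suc 0,2) = 0" "w_elem $$ (Suc 0,3) = 0"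
  "w_elem $$ (2,0) = 0" "w_elem $$ (2,Suc 0) = 0" "w_elem $$ (2,2) = 0" "w_elem $$ (2,3) = 1"
  "w_elem $$ (3,0) = 0" "w_elem $$ (3,Suc 0) = 0" "w_elem $$ (3,2) = 1" "w_elem $$ (3,3) = 0"
  by (simp_all add: w_elem_def)

lemma index_u_elem [simp]:
  "u_elem b $$ (0,0) = 1" "u_elem b $$ (0,Suc 0) = 0" "u_elem b $$ (0,2) = b" "u_elem b $$ (0,3) = 0"
  "u_elem b $$ (Suc 0,0) = 0" "u_elem b $$ (Suc 0,Suc 0) = 1" "u_elem b $$ (Suc 0,2) = 0" "u_elem b $$ (Suc 0,3) = b"
  "u_elem b $$ (2,0) = 0" "u_elem b $$ (2,Suc 0) = 0" "u_elem b $$ (2,2) = 1" "u_elem b $$ (2,3) = 0"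
  "u_elem b $$ (3,0) = 0" "u_elem b $$ (3,Suc 0) = 0" "u_elem b $$ (3,2) = 0" "u_elem b $$ (3,3) = 1"
  by (simp_all add: u_elem_def)

lemma index_z_elem [simp]:
  "z_elem c $$ (0,0) = 1" "z_elem c $$ (0,Suc 0) = 0" "z_elem c $$ (0,2) = 0" "z_elem c $$ (0,3) = c"
  "z_elem c $$ (Suc 0,0) = 0" "z_elem c $$ (Suc 0,Suc 0) = 1" "z_elem c $$ (Suc 0,2) = 0" "z_elem c $$ (Suc 0,3) = 0"
  "z_elem c $$ (2,0) = 0" "z_elem c $$ (2,Suc 0) = 0" "z_elem c $$ (2,2) = 1" "z_elem c $$ (2,3) = 0"
  "z_elem c $$ (3,0) = 0" "z_elem c $$ (3,Suc 0) = 0" "z_elem c $$ (3,2) = 0" "z_elem c $$ (3,3) = 1"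
  by (simp_all add: z_elem_def)

lemma column_0_embed_mid_mult:
  assumes "dim_row g = 4" "dim_col g = 4"
  shows "(embed_mid (mat2 p q r s) * g) $$ (0,0) = g$$(0,0)"
    "(embed_mid (mat2 p q r s) * g) $$ (Suc 0,0) = p * g$$(Suc 0,0) + q * g$$(2,0)"
    "(embed_mid (mat2 p q r s) * g) $$ (2,0) = r * g$$(Suc 0,0) + s * g$$(2,0)"
    "(embed_mid (mat2 p q r s) * g) $$ (3,0) = g$$(3,0)"
  using assms by simp_all

lemma column_0_w_elem_mult:
  assumes "dim_row g = 4" "dim_col g = 4"
  shows "(w_elem * g) $$ (0,0) = g$$(Suc 0,0)" "(w_elem * g) $$ (Suc 0,0) = g$$(0,0)"
    "(w_elem * g) $$ (2,0) = g$$(3,0)" "(w_elem * g) $$ (3,0) = g$$(2,0)"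
  using assms by simp_all

lemma column_0_block_diag_mult:
  assumes "dim_row g = 4" "dim_col g = 4"
  shows "(block_diag (mat2 a b c d) (mat2 e f x y) * g) $$ (0,0) = a * g$$(0,0) + b * g$$(Suc 0,0)"
    "(block_diag (mat2 a b c d) (mat2 e f x y) * g) $$ (Suc 0,0) = c * g$$(0,0) + d * g$$(Suc 0,0)"
    "(block_diag (mat2 a b c d) (mat2 e f x y) * g) $$ (2,0) = e * g$$(2,0) + f * g$$(3,0)"
    "(block_diag (mat2 a b c d) (mat2 e f x y) * g) $$ (3,0) = x * g$$(2,0) + y * g$$(3,0)"
  using assms by simp_all

context valued_field
begin

lemma x_elem_in_K1: "a \<in> Ov \<Longrightarrow> x_elem a \<in> K1 v"
  unfolding x_elem_def using block_diag_in_K1[of 1 a 0 1 1 "-a" 0 1] by (simp add: GL2_O_pair_def)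

lemma w_elem_in_K1: "w_elem \<in> K1 v"
  unfolding w_elem_def using block_diag_in_K1[of 0 1 1 0 0 1 1 0] by (simp add: GL2_O_pair_def)

lemma u_elem_in_K12_pow: "b \<in> Ov \<Longrightarrow> u_elem b \<in> K12_pow 3"
  using K12_pow_mult[OF K2_in_K12_pow K12_pow_mult[OF K1_in_K12_pow K2_in_K12_pow]]
  unfolding u_elem_def numeral_3_eq_3
  by (simp add: embed_mid_in_K2 x_elem_in_K1 SL2_O_entries_def)

lemma z_elem_in_K12_pow: "c \<in> Ov \<Longrightarrow> z_elem c \<in> K12_pow 3"
  using K12_pow_mult[OF K1_in_K12_pow K12_pow_mult[OF K2_in_K12_pow K1_in_K12_pow]]
  unfolding z_elem_def numeral_3_eq_3
  by (simp add: embed_mid_in_K2 w_elem_in_K1 SL2_O_entries_def)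

section \<open>Row reduction\<close>

text \<open>With first column \<open>e\<^sub>1\<close> and middle block 1, the symplectic relations leave only the first row
  \<open>(1, a, b, c)\<close> free, and then \<open>g = x(a) u(b) z(c - ab)\<close>.\<close>

lemma unipotent_in_K12_pow:
  assumes g: "g \<in> Sp4_O v"
    and e: "g$$(0,0) = 1" "g$$(Suc 0,0) = 0" "g$$(2,0) = 0" "g$$(3,0) = 0"
      "g$$(Suc 0,Suc 0) = 1" "g$$(Suc 0,2) = 0" "g$$(2,Suc 0) = 0" "g$$(2,2) = 1"
  shows "g \<in> K12_pow 7"
proof -
  note G = Sp4_OD[OF g]
  have r3: "g$$(3,Suc 0) = 0" "g$$(3,2) = 0" "g$$(3,3) = 1"
    using G(5)[of 0 1] G(5)[of 0 2] G(5)[of 0 3] e by (simp_all add: sympl_form_def)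
  have "g$$(2,3) = - g$$(0,Suc 0)" "g$$(Suc 0,3) = g$$(0,2)"
    using G(5)[of 1 3] G(5)[of 2 3] e r3 by (simp_all add: sympl_form_def eq_neg_iff_add_eq_0 add.commute)
  with r3 have "g = x_elem (g$$(0,1)) * (u_elem (g$$(0,2)) * z_elem (g$$(0,3) - g$$(0,1) * g$$(0,2)))"
    using e by (intro eq_mat_4I G(1)) (simp_all add: mult_carrier_mat[of _ 4 4 _ 4])
  moreover have "x_elem (g$$(0,1)) * (u_elem (g$$(0,2)) * z_elem (g$$(0,3) - g$$(0,1) * g$$(0,2)))
      \<in> K12_pow (1 + (3 + 3))"
    using G(4) by (intro K12_pow_mult K1_in_K12_pow x_elem_in_K1 u_elem_in_K12_pow z_elem_in_K12_pow) simp_all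
  ultimately show ?thesis by simp
qed

lemma column_0_e1_in_K12_pow:
  assumes g: "g \<in> Sp4_O v"
    and e: "g$$(0,0) = 1" "g$$(Suc 0,0) = 0" "g$$(2,0) = 0" "g$$(3,0) = 0"
  shows "g \<in> K12_pow 8"
proof -
  note G = Sp4_OD[OF g]
  have r3: "g$$(3,Suc 0) = 0" "g$$(3,2) = 0"
    using G(5)[of 0 1] G(5)[of 0 2] e by (simp_all add: sympl_form_def)
  have det: "g$$(Suc 0,Suc 0) * g$$(2,2) - g$$(2,Suc 0) * g$$(Suc 0,2) = 1"
    using G(5)[of 1 2] e r3 by (simp add: sympl_form_def)
  \<comment> \<open>the inverse of the middle block\<close>
  define k where "k = embed_mid (mat2 (g$$(2,2)) (- g$$(Suc 0,2)) (- g$$(2,Suc 0)) (g$$(Suc 0,Suc 0)))"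
  have k: "k \<in> K2 v"
    unfolding k_def using det G(4) by (intro embed_mid_in_K2) (simp add: SL2_O_entries_def algebra_simps)
  have "k * g \<in> K12_pow 7"
    using Sp4_O_mult[OF K2_subset_Sp4_O[OF k] g] unfolding k_def
    by (rule unipotent_in_K12_pow) (use G(2,3) e det in \<open>simp_all add: algebra_simps\<close>)
  with k G(1) show ?thesis
    using K12_pow_cancel_left[of k g 7] by simp
qed

lemma column_0_primitive:
  assumes g: "g \<in> Sp4_O v"
  shows "g$$(0,0) \<notin> Pv \<or> g$$(Suc 0,0) \<notin> Pv \<or> g$$(2,0) \<notin> Pv \<or> g$$(3,0) \<notin> Pv"
proof (rule ccontr)
  assume "\<not> ?thesis"
  then have P: "g$$(0,0) \<in> Pv" "g$$(Suc 0,0) \<in> Pv" "g$$(2,0) \<in> Pv" "g$$(3,0) \<in> Pv" by auto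
  note G = Sp4_OD[OF g]
  have "sympl_form g 0 3 \<in> Pv"
    unfolding sympl_form_def by (intro Pv_diff Pv_add Pv_mult P G(4)) (simp_all add: P)
  moreover have "sympl_form g 0 3 = 1"
    using G(5)[of 0 3] by simp
  ultimately show False
    using one_notin_Pv by simp
qed

lemma GL2_O_unit_to_e1:
  assumes "x \<in> Ov" "y \<in> Ov" "x \<notin> Pv \<or> y \<notin> Pv"
  obtains a b c d p q r s where "GL2_O_pair a b c d p q r s" "a * x + b * y = 1" "c * x + d * y = 0"
proof (cases "x \<notin> Pv")
  case True
  with assms Ov_divide_unit[of x] have "1 / x \<in> Ov" "y / x \<in> Ov" "x \<noteq> 0" by auto
  with assms have "GL2_O_pair (1/x) 0 (-(y/x)) 1 x 0 y 1"
    by (simp add: GL2_O_pair_def field_simps)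
  with \<open>x \<noteq> 0\<close> that show ?thesis by fastforce
next
  case False
  with assms Ov_divide_unit[of y] have "1 / y \<in> Ov" "x / y \<in> Ov" "y \<noteq> 0" by auto
  with assms have "GL2_O_pair 0 (1/y) 1 (-(x/y)) x 1 y 0"
    by (simp add: GL2_O_pair_def field_simps)
  with \<open>y \<noteq> 0\<close> that show ?thesis by fastforce
qed

lemma SL2_O_annihilate:
  assumes "x \<in> Ov" "y \<in> Ov"
  obtains p q r s where "SL2_O_entries p q r s" "r * x + s * y = 0"
proof -
  consider "x = 0" | "x \<noteq> 0" "y = 0 \<or> v x \<le> v y" | "x \<noteq> 0" "y \<noteq> 0" "v y < v x"
    by fastforce
  then show ?thesis
  proof cases
    case 1
    then show ?thesis
      using that[of 0 1 "-1" 0] by (simp add: SL2_O_entries_def)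
  next
    case 2
    with assms have "y / x \<in> Ov" by (auto intro: Ov_divide)
    with 2 show ?thesis
      using that[of 1 0 "- (y / x)" 1] by (simp add: SL2_O_entries_def)
  next
    case 3
    with assms have "x / y \<in> Ov" by (auto intro: Ov_divide)
    with 3 show ?thesis
      using that[of 0 1 "-1" "x / y"] by (simp add: SL2_O_entries_def)
  qed
qed

lemma column_0_lower_zero_in_K12_pow:
  assumes g: "g \<in> Sp4_O v" and e: "g$$(2,0) = 0" "g$$(3,0) = 0"
  shows "g \<in> K12_pow 9"
proof -
  note G = Sp4_OD[OF g]
  have unit: "g$$(0,0) \<notin> Pv \<or> g$$(Suc 0,0) \<notin> Pv"
    using column_0_primitive[OF g] e by (auto simp: mem_Pv_iff)
  have "g$$(0,0) \<in> Ov" "g$$(Suc 0,0) \<in> Ov"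
    by (simp_all add: G(4))
  then obtain a b c d p q r s where P: "GL2_O_pair a b c d p q r s"
    and u: "a * g$$(0,0) + b * g$$(Suc 0,0) = 1" "c * g$$(0,0) + d * g$$(Suc 0,0) = 0"
    using unit by (rule GL2_O_unit_to_e1)
  define k where "k = block_diag (mat2 a b c d) (mat2 s q r p)"
  have k: "k \<in> K1 v"
    unfolding k_def using P by (rule block_diag_in_K1)
  have "k * g \<in> K12_pow 8"
    using Sp4_O_mult[OF K1_subset_Sp4_O[OF k] g]
    by (rule column_0_e1_in_K12_pow) (use u e in \<open>simp_all add: k_def column_0_block_diag_mult[OF G(2,3)]\<close>)
  with k G(1) show ?thesis
    using K12_pow_cancel_left[of k g 8] by simp
qed

lemma column_0_entry_3_zero_in_K12_pow:
  assumes g: "g \<in> Sp4_O v" and e: "g$$(3,0) = 0"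
  shows "g \<in> K12_pow 10"
proof -
  note G = Sp4_OD[OF g]
  have "g$$(Suc 0,0) \<in> Ov" "g$$(2,0) \<in> Ov"
    by (simp_all add: G(4))
  then obtain p q r s where P: "SL2_O_entries p q r s" and z: "r * g$$(Suc 0,0) + s * g$$(2,0) = 0"
    by (rule SL2_O_annihilate)
  define k where "k = embed_mid (mat2 p q r s)"
  have k: "k \<in> K2 v"
    unfolding k_def using P by (rule embed_mid_in_K2)
  have "k * g \<in> K12_pow 9"
    using Sp4_O_mult[OF K2_subset_Sp4_O[OF k] g]
    by (rule column_0_lower_zero_in_K12_pow) (use z e in \<open>simp_all add: k_def column_0_embed_mid_mult[OF G(2,3)]\<close>)
  with k G(1) show ?thesis
    using K12_pow_cancel_left[of k g 9] by simp
qed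

lemma column_0_entry_2_zero_in_K12_pow:
  assumes g: "g \<in> Sp4_O v" and e: "g$$(2,0) = 0"
  shows "g \<in> K12_pow 11"
proof -
  note G = Sp4_OD[OF g]
  have "w_elem * g \<in> K12_pow 10"
    using Sp4_O_mult[OF K1_subset_Sp4_O[OF w_elem_in_K1] g]
    by (rule column_0_entry_3_zero_in_K12_pow) (simp add: column_0_w_elem_mult[OF G(2,3)] e)
  with w_elem_in_K1 G(1) show ?thesis
    using K12_pow_cancel_left[of w_elem g 10] by simp
qed

lemma Sp4_O_in_K12_pow:
  assumes g: "g \<in> Sp4_O v"
  shows "g \<in> K12_pow 12"
proof -
  note G = Sp4_OD[OF g]
  have "g$$(Suc 0,0) \<in> Ov" "g$$(2,0) \<in> Ov"
    by (simp_all add: G(4))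
  then obtain p q r s where P: "SL2_O_entries p q r s" and z: "r * g$$(Suc 0,0) + s * g$$(2,0) = 0"
    by (rule SL2_O_annihilate)
  define k where "k = embed_mid (mat2 p q r s)"
  have k: "k \<in> K2 v"
    unfolding k_def using P by (rule embed_mid_in_K2)
  have "k * g \<in> K12_pow 11"
    using Sp4_O_mult[OF K2_subset_Sp4_O[OF k] g]
    by (rule column_0_entry_2_zero_in_K12_pow) (use z in \<open>simp add: k_def column_0_embed_mid_mult[OF G(2,3)]\<close>)
  with k G(1) show ?thesis
    using K12_pow_cancel_left[of k g 11] by simp
qed

lemma Sp4_O_iff_alternating_product:
  assumes "12 \<le> n"
  shows "g \<in> Sp4_O v \<longleftrightarrow> (\<exists>ks. length ks = 2 * n \<and>
     (\<forall>i<2*n. (even i \<longrightarrow> ks ! i \<in> K1 v) \<and> (odd i \<longrightarrow> ks ! i \<in> K2 v)) \<and> g = foldr (*) ks (1\<^sub>m 4))"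
    (is "_ \<longleftrightarrow> (\<exists>ks. ?alternating ks)")
proof
  assume "g \<in> Sp4_O v"
  then have "g \<in> K12_pow n"
    using K12_pow_mono[OF Sp4_O_in_K12_pow] assms by blast
  then show "\<exists>ks. ?alternating ks"
    by (rule K12_pow_alternating_list)
next
  assume "\<exists>ks. ?alternating ks"
  then show "g \<in> Sp4_O v"
    using alternating_product_in_Sp4_O by auto
qed

end

theorem lemma3p9:
  fixes v :: "'a::field \<Rightarrow> int"
  assumes "nonarch_local_field v"
  shows "g \<in> Sp4_O v \<longleftrightarrow>
           (\<exists>ks :: 'a mat list. length ks = 60 \<and>
              (\<forall>i<60. (even i \<longrightarrow> ks ! i \<in> K1 v) \<and> (odd i \<longrightarrow> ks ! i \<in> K2 v)) \<and>
              g = foldr (*) ks (1\<^sub>m 4))"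
proof -
  interpret valued_field v
    using assms by unfold_locales (simp add: nonarch_local_field_def)
  show ?thesis
    using Sp4_O_iff_alternating_product[of 30 g] by simp
qed

end
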